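(* Let $M$ and $N$ be $\lambda$-terms such that $M$ is simple. If $M$ does not improve $N$ eventually, i.e. if not $\mathrm{BT}^c(M) \le_{\mathrm{ev}} \mathrm{BT}^c(N)$, then $M \neq_\beta N$.
   Context: Untyped $\lambda$-calculus modulo $\alpha$. Head reduction step: $\lambda x_1\ldots x_n.(\lambda y.P)QQ_1\ldots Q_m \to \lambda x_1\ldots x_n.P[y:=Q]Q_1\ldots Q_m$; hnf: $\lambda x_1\ldots x_n.\,yQ_1\ldots Q_m$. Clocked Böhm tree $\mathrm{BT}^c(M)$ (coinductive): $\bot$ if $M$ has no hnf; otherwise if $M\to_h^k \lambda x_1\ldots x_n.\,yM_1\ldots M_m$ is the head reduction to hnf, $\mathrm{BT}^c(M)$ is $\lambda x_1\ldots x_n.\,y\,\mathrm{BT}^c(M_1)\ldots\mathrm{BT}^c(M_m)$ with root annotated by $k$. Positions: sequences over $\{0,1,2\}$ ($0$ abstraction body, $1$ function, $2$ argument). $T_1 \le_{\mathrm{ev}} T_2$ means $T_1,T_2$ coincide after erasing annotations and there is $\ell$ such that at every position $p$ of $T_1$ with $|p|\ge\ell$, either neither subtree at $p$ has a root annotation or both do, with annotations $k_1\le k_2$. A redex $(\lambda x.P)Q$ is simple if $x$ occurs at most once in $P$ or $Q$ is a $\beta$-normal form. The simple terms form the largest set $X$ such that each $M\in X$ either has no hnf, or its head reduction to hnf $\lambda x_1\ldots x_n.\,yM_1\ldots M_m$ contracts only simple redexes and $M_1,\dots,M_m\in X$. *)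

theory Defs
  imports Main
begin

datatype dB = Var nat | App dB dB | Abs dB

primrec dlift :: "dB \<Rightarrow> nat \<Rightarrow> dB" where
  "dlift (Var i) k = (if i < k then Var i else Var (Suc i))"
| "dlift (App s t) k = App (dlift s k) (dlift t k)"
| "dlift (Abs s) k = Abs (dlift s (Suc k))"

primrec dsubst :: "dB \<Rightarrow> dB \<Rightarrow> nat \<Rightarrow> dB" where
  "dsubst (Var i) s k = (if k < i then Var (i - 1) else if i = k then s else Var i)"
| "dsubst (App t u) s k = App (dsubst t s k) (dsubst u s k)"
| "dsubst (Abs t) s k = Abs (dsubst t (dlift s 0) (Suc k))"

inductive beta :: "dB \<Rightarrow> dB \<Rightarrow> bool" where
  beta_redex: "beta (App (Abs s) t) (dsubst s t 0)"
| beta_appL: "beta s t \<Longrightarrow> beta (App s u) (App t u)"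
| beta_appR: "beta s t \<Longrightarrow> beta (App u s) (App u t)"
| beta_abs: "beta s t \<Longrightarrow> beta (Abs s) (Abs t)"

definition beta_eq :: "dB \<Rightarrow> dB \<Rightarrow> bool" where
  "beta_eq = equivclp beta"

definition beta_nf :: "dB \<Rightarrow> bool" where
  "beta_nf M \<longleftrightarrow> \<not> (\<exists>N. beta M N)"

fun is_abs :: "dB \<Rightarrow> bool" where
  "is_abs (Abs _) = True"
| "is_abs _ = False"

inductive hred_lab :: "dB \<Rightarrow> dB \<times> dB \<Rightarrow> dB \<Rightarrow> bool" where
  hred_redex: "hred_lab (App (Abs P) Q) (P, Q) (dsubst P Q 0)"
| hred_app: "hred_lab M r N \<Longrightarrow> \<not> is_abs M \<Longrightarrow> hred_lab (App M Q) r (App N Q)"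
| hred_abs: "hred_lab M r N \<Longrightarrow> hred_lab (Abs M) r (Abs N)"

definition hred :: "dB \<Rightarrow> dB \<Rightarrow> bool" where
  "hred M N \<longleftrightarrow> (\<exists>r. hred_lab M r N)"

fun is_happ :: "dB \<Rightarrow> bool" where
  "is_happ (Var _) = True"
| "is_happ (App M _) = is_happ M"
| "is_happ (Abs _) = False"

fun is_hnf :: "dB \<Rightarrow> bool" where
  "is_hnf (Abs M) = is_hnf M"
| "is_hnf M = is_happ M"

definition has_hnf :: "dB \<Rightarrow> bool" where
  "has_hnf M \<longleftrightarrow> (\<exists>N. hred\<^sup>*\<^sup>* M N \<and> is_hnf N)"

text \<open>Number of head reduction steps to the head normal form, and the hnf itself
  (meaningful when has_hnf M).\<close>
definition hnf_steps :: "dB \<Rightarrow> nat" where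
  "hnf_steps M = (LEAST k. \<exists>N. (hred ^^ k) M N \<and> is_hnf N)"

definition hnf_of :: "dB \<Rightarrow> dB" where
  "hnf_of M = (THE N. (hred ^^ hnf_steps M) M N \<and> is_hnf N)"

fun hnf_args :: "dB \<Rightarrow> dB list" where
  "hnf_args (Abs M) = hnf_args M"
| "hnf_args (App M N) = hnf_args M @ [N]"
| "hnf_args (Var _) = []"

primrec occs :: "nat \<Rightarrow> dB \<Rightarrow> nat" where
  "occs k (Var i) = (if i = k then 1 else 0)"
| "occs k (App s t) = occs k s + occs k t"
| "occs k (Abs s) = occs (Suc k) s"

definition simple_redex :: "dB \<Rightarrow> dB \<Rightarrow> bool" where
  "simple_redex P Q \<longleftrightarrow> occs 0 P \<le> 1 \<or> beta_nf Q"

definition hred_simple :: "dB \<Rightarrow> dB \<Rightarrow> bool" where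
  "hred_simple M N \<longleftrightarrow> (\<exists>P Q. hred_lab M (P, Q) N \<and> simple_redex P Q)"

coinductive simple_term :: "dB \<Rightarrow> bool" where
  simple_no_hnf: "\<not> has_hnf M \<Longrightarrow> simple_term M"
| simple_hnf: "has_hnf M \<Longrightarrow> hred_simple\<^sup>*\<^sup>* M (hnf_of M) \<Longrightarrow>
     (\<forall>A. A \<in> set (hnf_args (hnf_of M)) \<longrightarrow> simple_term A) \<Longrightarrow> simple_term M"

text \<open>Positions are lists over {0,1,2}: 0 abstraction body, 1 function, 2 argument.
  A cursor is either the root of the subtree BTc(M) (CRoot M)
  or an inner node of the spine of an hnf (CInner H).\<close>
datatype cursor = CRoot dB | CInner dB

datatype bnode = NBot | NAbs | NApp | NVar nat

fun spine_step :: "dB \<Rightarrow> nat \<Rightarrow> cursor option" where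
  "spine_step (Abs B) d = (if d = 0 then Some (CInner B) else None)"
| "spine_step (App F A) d =
     (if d = 1 then Some (CInner F) else if d = 2 then Some (CRoot A) else None)"
| "spine_step (Var _) d = None"

fun cursor_step :: "cursor \<Rightarrow> nat \<Rightarrow> cursor option" where
  "cursor_step (CRoot M) d = (if has_hnf M then spine_step (hnf_of M) d else None)"
| "cursor_step (CInner H) d = spine_step H d"

fun cursor_walk :: "cursor \<Rightarrow> nat list \<Rightarrow> cursor option" where
  "cursor_walk c [] = Some c"
| "cursor_walk c (d # ds) = (case cursor_step c d of None \<Rightarrow> None | Some c' \<Rightarrow> cursor_walk c' ds)"

fun term_label :: "dB \<Rightarrow> bnode" where
  "term_label (Abs _) = NAbs"
| "term_label (App _ _) = NApp"
| "term_label (Var i) = NVar i"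

fun cursor_label :: "cursor \<Rightarrow> bnode" where
  "cursor_label (CRoot M) = (if has_hnf M then term_label (hnf_of M) else NBot)"
| "cursor_label (CInner H) = term_label H"

fun cursor_ann :: "cursor \<Rightarrow> nat option" where
  "cursor_ann (CRoot M) = (if has_hnf M then Some (hnf_steps M) else None)"
| "cursor_ann (CInner _) = None"

text \<open>Erased clocked Boehm tree of M: node label at each position (None = not a position).\<close>
definition bt_label :: "dB \<Rightarrow> nat list \<Rightarrow> bnode option" where
  "bt_label M p = map_option cursor_label (cursor_walk (CRoot M) p)"

definition bt_ann :: "dB \<Rightarrow> nat list \<Rightarrow> nat option" where
  "bt_ann M p = Option.bind (cursor_walk (CRoot M) p) cursor_ann"

definition bt_le_ev :: "dB \<Rightarrow> dB \<Rightarrow> bool" where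
  "bt_le_ev M N \<longleftrightarrow> bt_label M = bt_label N \<and>
     (\<exists>l. \<forall>p. bt_label M p \<noteq> None \<longrightarrow> l \<le> length p \<longrightarrow>
        (bt_ann M p = None \<and> bt_ann N p = None) \<or>
        (\<exists>k1 k2. bt_ann M p = Some k1 \<and> bt_ann N p = Some k2 \<and> k1 \<le> k2))"

end

theory Submission
  imports Defs
begin

text \<open>
  If \<open>M =\<^sub>\<beta> N\<close>, then by Church-Rosser \<open>M\<close> and \<open>N\<close> have a common reduct \<open>L\<close>. Along any
  reduction \<open>A \<rightarrow>\<^sup>n B\<close> the head reduction of \<open>A\<close> to its hnf projects onto the head reduction of
  \<open>B\<close> to an hnf with the same head variable, the same number of abstractions and arguments
  which are reducts of those of \<open>A\<close>, and which is not longer. Hence \<open>BT\<^sup>c(A)\<close> and \<open>BT\<^sup>c(B)\<close> have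
  the same shape and the clocks of \<open>BT\<^sup>c(B)\<close> are pointwise below those of \<open>BT\<^sup>c(A)\<close>; this gives
  \<open>BT\<^sup>c(L) \<le> BT\<^sup>c(N)\<close>. If \<open>A\<close> is simple the projection is also economical: a simple redex
  duplicates none of the reduction steps in its argument, so the loss of head steps at the root
  plus the reduction steps left for the arguments is at most \<open>n\<close>. Distributing this budget over
  the tree, the clocks of \<open>BT\<^sup>c(M)\<close> and \<open>BT\<^sup>c(L)\<close> differ at no more than \<open>n\<close> positions, so they agree
  below some depth, and \<open>BT\<^sup>c(M) \<le>\<^sub>e\<^sub>v BT\<^sup>c(L) \<le> BT\<^sup>c(N)\<close>.
\<close>

lemma lift_lift:
  "i < k + 1 \<Longrightarrow> dlift (dlift t i) (Suc k) = dlift (dlift t k) i"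
  by (induct t arbitrary: i k) auto

lemma lift_subst [simp]:
  "j < i + 1 \<Longrightarrow> dlift (dsubst t s j) i = dsubst (dlift t (i + 1)) (dlift s i) j"
  by (induct t arbitrary: i j s) (simp_all add: diff_Suc lift_lift split: nat.split)

lemma lift_subst_lt:
  "i < j + 1 \<Longrightarrow> dlift (dsubst t s j) i = dsubst (dlift t i) (dlift s i) (j + 1)"
  by (induct t arbitrary: i j s) (auto simp add: lift_lift)

lemma subst_lift [simp]: "dsubst (dlift t k) s k = t"
  by (induct t arbitrary: k s) simp_all

lemma subst_subst:
  "i < j + 1 \<Longrightarrow> dsubst (dsubst t (dlift v i) (Suc j)) (dsubst u v j) i = dsubst (dsubst t u i) v j"
  by (induct t arbitrary: i j u v)
    (simp_all add: diff_Suc lift_lift [symmetric] lift_subst_lt split: nat.split)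

lemma beta_lift: "beta s t \<Longrightarrow> beta (dlift s i) (dlift t i)"
  by (induct s t arbitrary: i rule: beta.induct) (auto intro: beta.intros)

lemma beta_subst: "beta s t \<Longrightarrow> beta (dsubst s u i) (dsubst t u i)"
proof (induct s t arbitrary: u i rule: beta.induct)
  case (beta_redex s t)
  then show ?case using beta.beta_redex[of "dsubst s (dlift u 0) (Suc i)" "dsubst t u i"]
    by (simp add: subst_subst [symmetric])
qed (auto intro: beta.intros)

lemma beta_App_cases:
  "beta (App s u) B \<Longrightarrow> (\<exists>P. s = Abs P \<and> B = dsubst P u 0) \<or>
     (\<exists>t. beta s t \<and> B = App t u) \<or> (\<exists>t. beta u t \<and> B = App s t)"
  by (cases rule: beta.cases) auto

lemma beta_Abs_cases: "beta (Abs s) B \<Longrightarrow> \<exists>t. beta s t \<and> B = Abs t"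
  by (cases rule: beta.cases) auto

lemma not_beta_Var: "\<not> beta (Var i) B"
  by (auto elim: beta.cases)

lemma relpowp_map:
  assumes "\<And>x y. R x y \<Longrightarrow> S (f x) (f y)"
  shows "(R ^^ n) x y \<Longrightarrow> (S ^^ n) (f x) (f y)"
  by (induct n arbitrary: y) (auto intro: assms)

lemma rtranclp_map:
  assumes "\<And>x y. R x y \<Longrightarrow> S (f x) (f y)"
  shows "R\<^sup>*\<^sup>* x y \<Longrightarrow> S\<^sup>*\<^sup>* (f x) (f y)"
  by (induct rule: rtranclp_induct) (auto intro: rtranclp.rtrancl_into_rtrancl assms)

lemma beta_pow_Abs: "(beta ^^ n) s t \<Longrightarrow> (beta ^^ n) (Abs s) (Abs t)"
  by (rule relpowp_map[where f=Abs]) (auto intro: beta.intros)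

lemma beta_pow_AppL: "(beta ^^ n) s t \<Longrightarrow> (beta ^^ n) (App s u) (App t u)"
  by (rule relpowp_map[where f="\<lambda>x. App x u"]) (auto intro: beta.intros)

lemma beta_pow_AppR: "(beta ^^ n) s t \<Longrightarrow> (beta ^^ n) (App u s) (App u t)"
  by (rule relpowp_map[where f="\<lambda>x. App u x"]) (auto intro: beta.intros)

lemma beta_pow_App:
  "(beta ^^ m) s t \<Longrightarrow> (beta ^^ n) u v \<Longrightarrow> (beta ^^ (m + n)) (App s u) (App t v)"
  by (rule relpowp_trans[OF beta_pow_AppL beta_pow_AppR])

lemma beta_pow_lift: "(beta ^^ n) s t \<Longrightarrow> (beta ^^ n) (dlift s i) (dlift t i)"
  by (rule relpowp_map[where f="\<lambda>x. dlift x i"]) (auto intro: beta_lift)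

lemma beta_pow_subst_left: "(beta ^^ n) s t \<Longrightarrow> (beta ^^ n) (dsubst s u i) (dsubst t u i)"
  by (rule relpowp_map[where f="\<lambda>x. dsubst x u i"]) (auto intro: beta_subst)

lemma beta_pow_subst_right:
  "(beta ^^ m) Q Q' \<Longrightarrow> (beta ^^ (occs k P * m)) (dsubst P Q k) (dsubst P Q' k)"
proof (induct P arbitrary: k Q Q' m)
  case (Var i)
  then show ?case by auto
next
  case (App P1 P2)
  have "(beta ^^ (occs k P1 * m + occs k P2 * m)) (App (dsubst P1 Q k) (dsubst P2 Q k))
     (App (dsubst P1 Q' k) (dsubst P2 Q' k))"
    by (rule beta_pow_App) (use App in auto)
  then show ?case by (simp add: algebra_simps)
next
  case (Abs P)
  from Abs(1)[OF beta_pow_lift[OF Abs(2)], of "Suc k"] show ?case by (auto intro: beta_pow_Abs)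
qed

lemma beta_nf_pow:
  assumes "beta_nf Q" "(beta ^^ m) Q Q'"
  shows "m = 0 \<and> Q' = Q"
proof (cases m)
  case (Suc k)
  then show ?thesis using assms by (metis beta_nf_def relpowp_Suc_D2)
qed (use assms in simp)

lemma simple_redex_copies:
  "simple_redex P Q \<Longrightarrow> (beta ^^ n) Q Q' \<Longrightarrow> occs 0 P * n \<le> n"
  unfolding simple_redex_def using beta_nf_pow by (auto intro: mult_le_one)

lemma rtranclp_beta_App: "beta\<^sup>*\<^sup>* s s' \<Longrightarrow> beta\<^sup>*\<^sup>* t t' \<Longrightarrow> beta\<^sup>*\<^sup>* (App s t) (App s' t')"
  by (metis beta_pow_App rtranclp_power)

lemma rtranclp_beta_Abs: "beta\<^sup>*\<^sup>* s s' \<Longrightarrow> beta\<^sup>*\<^sup>* (Abs s) (Abs s')"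
  by (metis beta_pow_Abs rtranclp_power)

section \<open>Church-Rosser\<close>

inductive par :: "dB \<Rightarrow> dB \<Rightarrow> bool" where
  par_Var: "par (Var n) (Var n)"
| par_Abs: "par s s' \<Longrightarrow> par (Abs s) (Abs s')"
| par_App: "par s s' \<Longrightarrow> par t t' \<Longrightarrow> par (App s t) (App s' t')"
| par_beta: "par s s' \<Longrightarrow> par t t' \<Longrightarrow> par (App (Abs s) t) (dsubst s' t' 0)"

lemma par_refl [simp, intro]: "par t t"
  by (induct t) (auto intro: par.intros)

lemma beta_into_par: "beta s t \<Longrightarrow> par s t"
  by (induct rule: beta.induct) (auto intro: par.intros)

lemma par_into_rtranclp_beta: "par s t \<Longrightarrow> beta\<^sup>*\<^sup>* s t"
proof (induct rule: par.induct)
  case (par_beta s s' t t')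
  have "beta\<^sup>*\<^sup>* (App (Abs s) t) (App (Abs s') t')"
    by (intro rtranclp_beta_App rtranclp_beta_Abs) fact+
  then show ?case by (simp add: beta.beta_redex rtranclp.rtrancl_into_rtrancl)
qed (auto intro: rtranclp_beta_App rtranclp_beta_Abs)

lemma par_lift: "par s t \<Longrightarrow> par (dlift s i) (dlift t i)"
proof (induct s t arbitrary: i rule: par.induct)
  case (par_beta s s' t t')
  then show ?case
    using par.par_beta[of "dlift s (Suc i)" "dlift s' (Suc i)" "dlift t i" "dlift t' i"] by simp
qed (auto intro: par.intros)

lemma par_subst: "par s s' \<Longrightarrow> par t t' \<Longrightarrow> par (dsubst s t k) (dsubst s' t' k)"
proof (induct s s' arbitrary: t t' k rule: par.induct)
  case (par_Abs s s')
  have "par (dsubst s (dlift t 0) (Suc k)) (dsubst s' (dlift t' 0) (Suc k))"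
    by (rule par_Abs(2)) (rule par_lift, rule par_Abs(3))
  then show ?case by (auto intro!: par.intros)
next
  case (par_beta s s' u u')
  have "par (App (Abs (dsubst s (dlift t 0) (Suc k))) (dsubst u t k))
     (dsubst (dsubst s' (dlift t' 0) (Suc k)) (dsubst u' t' k) 0)"
    by (rule par.par_beta) (use par_beta par_lift in auto)
  then show ?case by (simp add: subst_subst[where i=0, symmetric])
qed (auto intro!: par.intros)

text \<open>Complete development: contract every redex present in the term.\<close>
fun cd :: "dB \<Rightarrow> dB" where
  "cd (Var n) = Var n"
| "cd (Abs s) = Abs (cd s)"
| "cd (App (Abs s) t) = dsubst (cd s) (cd t) 0"
| "cd (App (Var n) t) = App (Var n) (cd t)"
| "cd (App (App s u) t) = App (cd (App s u)) (cd t)"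

lemma par_cd: "par s t \<Longrightarrow> par t (cd s)"
proof (induct s t rule: par.induct)
  case (par_App s s' t t')
  show ?case
  proof (cases s)
    case (Abs b)
    with par_App obtain b' where "s' = Abs b'" "par b' (cd b)"
      by (auto elim: par.cases)
    then show ?thesis using par_App Abs by (auto intro: par.intros)
  qed (use par_App in \<open>auto intro: par.intros\<close>)
qed (auto intro: par.intros par_subst)

lemma par_strip: "par\<^sup>*\<^sup>* a b \<Longrightarrow> par a c \<Longrightarrow> \<exists>d. par b d \<and> par\<^sup>*\<^sup>* c d"
proof (induct arbitrary: c rule: rtranclp_induct)
  case (step y z)
  then obtain d where "par y d" "par\<^sup>*\<^sup>* c d" by auto
  then show ?case using step par_cd by (meson rtranclp.rtrancl_into_rtrancl)
qed auto

lemma par_confluent: "par\<^sup>*\<^sup>* a b \<Longrightarrow> par\<^sup>*\<^sup>* a c \<Longrightarrow> \<exists>d. par\<^sup>*\<^sup>* b d \<and> par\<^sup>*\<^sup>* c d"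
proof (induct arbitrary: c rule: rtranclp_induct)
  case (step y z)
  then obtain d where d: "par\<^sup>*\<^sup>* y d" "par\<^sup>*\<^sup>* c d" by blast
  from par_strip[OF d(1) step(2)] obtain e where "par d e" "par\<^sup>*\<^sup>* z e" by blast
  then show ?case using d(2) by (meson rtranclp.rtrancl_into_rtrancl)
qed auto

lemma rtranclp_par_eq_rtranclp_beta: "par\<^sup>*\<^sup>* = beta\<^sup>*\<^sup>*"
proof (intro ext iffI)
  show "par\<^sup>*\<^sup>* x y \<Longrightarrow> beta\<^sup>*\<^sup>* x y" for x y
    by (induct rule: rtranclp_induct) (auto dest: par_into_rtranclp_beta)
  show "beta\<^sup>*\<^sup>* x y \<Longrightarrow> par\<^sup>*\<^sup>* x y" for x y
    by (rule rtranclp_mono[THEN predicate2D, of beta par]) (auto intro: beta_into_par)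
qed

lemma beta_confluent: "beta\<^sup>*\<^sup>* a b \<Longrightarrow> beta\<^sup>*\<^sup>* a c \<Longrightarrow> \<exists>d. beta\<^sup>*\<^sup>* b d \<and> beta\<^sup>*\<^sup>* c d"
  using par_confluent unfolding rtranclp_par_eq_rtranclp_beta .

lemma beta_eq_common_reduct: "beta_eq M N \<Longrightarrow> \<exists>L. beta\<^sup>*\<^sup>* M L \<and> beta\<^sup>*\<^sup>* N L"
  unfolding beta_eq_def equivclp_def
proof (induct rule: rtranclp_induct)
  case (step y z)
  then obtain L where L: "beta\<^sup>*\<^sup>* M L" "beta\<^sup>*\<^sup>* y L" by auto
  from step(2) consider "beta y z" | "beta z y" by (auto simp: symclp_def)
  then show ?case
  proof cases
    case 1
    then obtain d where "beta\<^sup>*\<^sup>* L d" "beta\<^sup>*\<^sup>* z d" using beta_confluent[OF L(2)] by blast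
    then show ?thesis using L by (meson rtranclp_trans)
  next
    case 2
    then show ?thesis using L by auto
  qed
qed auto

text \<open>Arguments are listed from the outermost application inwards, so \<open>apps X [R\<^sub>1, R\<^sub>2] = X R\<^sub>2 R\<^sub>1\<close>.\<close>
fun apps :: "dB \<Rightarrow> dB list \<Rightarrow> dB" where
  "apps X [] = X"
| "apps X (R # Rs) = App (apps X Rs) R"

definition hplug :: "nat \<Rightarrow> dB list \<Rightarrow> dB \<Rightarrow> dB" where
  "hplug a Rs X = (Abs ^^ a) (apps X Rs)"

lemma hplug_0 [simp]: "hplug 0 Rs X = apps X Rs"
  by (simp add: hplug_def)

lemma hplug_Suc [simp]: "hplug (Suc a) Rs X = Abs (hplug a Rs X)"
  by (simp add: hplug_def)

lemma is_abs_apps: "is_abs (apps X Rs) \<longleftrightarrow> Rs = [] \<and> is_abs X"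
  by (cases Rs) auto

lemma apps_apps: "apps (apps X A) B = apps X (B @ A)"
  by (induct B) auto

lemma apps_snoc: "apps X (Rs @ [R]) = apps (App X R) Rs"
  using apps_apps[of X "[R]" Rs] by simp

lemma dsubst_apps: "dsubst (apps X Rs) t k = apps (dsubst X t k) (map (\<lambda>R. dsubst R t k) Rs)"
  by (induct Rs) auto

lemma hred_lab_hplugD:
  "hred_lab M r N \<Longrightarrow> \<exists>a Rs. M = hplug a Rs (App (Abs (fst r)) (snd r)) \<and>
      N = hplug a Rs (dsubst (fst r) (snd r) 0)"
proof (induct rule: hred_lab.induct)
  case (hred_redex P Q)
  then show ?case by (intro exI[of _ 0] exI[of _ "[]"]) simp
next
  case (hred_app M r N Q)
  then obtain a Rs where e: "M = hplug a Rs (App (Abs (fst r)) (snd r))"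
      "N = hplug a Rs (dsubst (fst r) (snd r) 0)" by blast
  have "a = 0" using hred_app(3) e(1) by (cases a) auto
  then show ?case using e by (intro exI[of _ 0] exI[of _ "Q # Rs"]) simp
next
  case (hred_abs M r N)
  then obtain a Rs where "M = hplug a Rs (App (Abs (fst r)) (snd r))"
      "N = hplug a Rs (dsubst (fst r) (snd r) 0)" by blast
  then show ?case by (intro exI[of _ "Suc a"] exI[of _ Rs]) simp
qed

lemma hred_lab_apps: "hred_lab (apps (App (Abs P) Q) Rs) (P, Q) (apps (dsubst P Q 0) Rs)"
  by (induct Rs) (auto intro!: hred_lab.intros simp: is_abs_apps)

lemma hred_lab_hplugI:
  "hred_lab (hplug a Rs (App (Abs P) Q)) (P, Q) (hplug a Rs (dsubst P Q 0))"
  by (induct a) (auto intro: hred_lab.hred_abs hred_lab_apps)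

lemma hred_lab_iff_hplug:
  "hred_lab M (P, Q) N \<longleftrightarrow>
     (\<exists>a Rs. M = hplug a Rs (App (Abs P) Q) \<and> N = hplug a Rs (dsubst P Q 0))"
  using hred_lab_hplugD[of M "(P, Q)" N] hred_lab_hplugI by auto

lemma hred_hplug: "hred (hplug a Rs (App (Abs P) Q)) (hplug a Rs (dsubst P Q 0))"
  unfolding hred_def using hred_lab_hplugI by blast

lemma hred_lab_deterministic: "hred_lab M r N \<Longrightarrow> hred_lab M r' N' \<Longrightarrow> r' = r \<and> N' = N"
proof (induct arbitrary: r' N' rule: hred_lab.induct)
  case (hred_redex P Q)
  then show ?case by (cases rule: hred_lab.cases) auto
next
  case (hred_app M r N Q)
  from hred_app.prems obtain N0 where "hred_lab M r' N0" "N' = App N0 Q"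
    using hred_app.hyps(3) by (cases rule: hred_lab.cases) auto
  then show ?case using hred_app.hyps(2) by blast
next
  case (hred_abs M r N)
  from hred_abs.prems obtain N0 where "hred_lab M r' N0" "N' = Abs N0"
    by (cases rule: hred_lab.cases) auto
  then show ?case using hred_abs.hyps(2) by blast
qed

lemma hred_deterministic: "hred M N \<Longrightarrow> hred M N' \<Longrightarrow> N' = N"
  using hred_lab_deterministic by (auto simp: hred_def)

lemma hred_Abs_pow: "(hred ^^ k) (Abs b) H \<Longrightarrow> \<exists>H'. H = Abs H' \<and> (hred ^^ k) b H'"
proof (induct k arbitrary: H)
  case (Suc k)
  from Suc.prems obtain H0 where "(hred ^^ k) (Abs b) H0" "hred H0 H" by auto
  then obtain H0' r where H0': "(hred ^^ k) b H0'" "hred_lab (Abs H0') r H"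
    using Suc.hyps unfolding hred_def by blast
  from H0'(2) obtain H' where "H = Abs H'" "hred_lab H0' r H'"
    by (cases rule: hred_lab.cases) auto
  moreover have "hred H0' H'" using \<open>hred_lab H0' r H'\<close> unfolding hred_def by blast
  ultimately show ?case using H0'(1) by auto
qed simp

lemma is_happ_no_hred_lab: "hred_lab M r N \<Longrightarrow> \<not> is_happ M"
  by (induct rule: hred_lab.induct) auto

lemma is_hnf_no_hred_lab: "hred_lab M r N \<Longrightarrow> \<not> is_hnf M"
  by (induct rule: hred_lab.induct) (auto dest: is_happ_no_hred_lab)

lemma is_hnf_no_hred: "is_hnf M \<Longrightarrow> \<not> hred M N"
  using is_hnf_no_hred_lab by (auto simp: hred_def)

lemma not_is_hnf_hplug_redex: "\<not> is_hnf (hplug a Rs (App (Abs P) Q))"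
  using is_hnf_no_hred_lab hred_lab_hplugI by blast

lemma is_hnf_hplug_Var: "is_hnf (hplug a Rs (Var y))"
proof (induct a)
  case 0
  have "is_happ (apps (Var y) Rs)" by (induct Rs) auto
  then show ?case by (cases Rs) auto
qed simp

lemma is_happ_apps_Var: "is_happ M \<Longrightarrow> \<exists>Rs y. M = apps (Var y) Rs"
proof (induct M)
  case (Var n) then show ?case by (intro exI[of _ "[]"]) auto
next
  case (App F A)
  then obtain Rs y where "F = apps (Var y) Rs" by auto
  then show ?case by (intro exI[of _ "A # Rs"]) auto
qed simp

lemma is_hnf_imp_hplug_Var: "is_hnf M \<Longrightarrow> \<exists>a Rs y. M = hplug a Rs (Var y)"
proof (induct M)
  case (Var n) then show ?case by (intro exI[of _ 0] exI[of _ "[]"] exI[of _ n]) simp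
next
  case (Abs M)
  then obtain a Rs y where "M = hplug a Rs (Var y)" by auto
  then show ?case by (intro exI[of _ "Suc a"]) auto
next
  case (App F A)
  then have "is_happ (App F A)" by simp
  then show ?case using is_happ_apps_Var by (metis hplug_0)
qed

lemma hnf_args_hplug_Var: "hnf_args (hplug a Rs (Var y)) = rev Rs"
proof -
  have "hnf_args (apps (Var y) Rs) = rev Rs" by (induct Rs) auto
  then show ?thesis by (induct a) auto
qed

lemma hnf_unique:
  "(hred ^^ k) M H \<Longrightarrow> is_hnf H \<Longrightarrow> (hred ^^ k') M H' \<Longrightarrow> is_hnf H' \<Longrightarrow> k' = k \<and> H' = H"
proof (induct k arbitrary: M k')
  case 0
  show ?case
  proof (cases k')
    case (Suc k'')
    then obtain z where "hred M z" using 0 by (metis relpowp_Suc_D2)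
    then show ?thesis using 0 is_hnf_no_hred by simp
  qed (use 0 in simp)
next
  case (Suc k)
  from Suc.prems(1) obtain M1 where M1: "hred M M1" "(hred ^^ k) M1 H"
    by (metis relpowp_Suc_D2)
  show ?case
  proof (cases k')
    case 0
    then show ?thesis using Suc.prems M1 is_hnf_no_hred by auto
  next
    case (Suc k'')
    then obtain M2 where M2: "hred M M2" "(hred ^^ k'') M2 H'"
      using Suc.prems(3) by (metis relpowp_Suc_D2)
    have "M2 = M1" using M1 M2 hred_deterministic by blast
    then show ?thesis using Suc.hyps[OF M1(2) Suc.prems(2) _ Suc.prems(4)] M2 Suc by auto
  qed
qed

lemma hnf_of_hnf_stepsI:
  assumes "(hred ^^ k) M H" "is_hnf H"
  shows "has_hnf M \<and> hnf_steps M = k \<and> hnf_of M = H"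
proof -
  have h: "has_hnf M" using assms by (auto simp: has_hnf_def intro: relpowp_imp_rtranclp)
  have s: "hnf_steps M = k" unfolding hnf_steps_def
    by (rule Least_equality) (use assms hnf_unique in \<open>blast, metis order_refl\<close>)
  have "hnf_of M = H" unfolding hnf_of_def s
    by (rule the_equality) (use assms hnf_unique in blast)+
  then show ?thesis using h s by auto
qed

lemma has_hnf_hred_pow:
  "has_hnf M \<Longrightarrow> (hred ^^ hnf_steps M) M (hnf_of M) \<and> is_hnf (hnf_of M)"
proof -
  assume "has_hnf M"
  then obtain H k where "(hred ^^ k) M H" "is_hnf H"
    by (auto simp: has_hnf_def dest: rtranclp_imp_relpowp)
  then show ?thesis using hnf_of_hnf_stepsI by metis
qed

lemma has_hnf_Abs: "has_hnf b \<Longrightarrow> has_hnf (Abs b)"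
proof -
  have "hred\<^sup>*\<^sup>* b H \<Longrightarrow> hred\<^sup>*\<^sup>* (Abs b) (Abs H)" for H
    by (rule rtranclp_map[where f=Abs]) (auto simp: hred_def intro: hred_lab.hred_abs)
  then show "has_hnf b \<Longrightarrow> has_hnf (Abs b)" unfolding has_hnf_def by fastforce
qed

lemma has_hnf_hred_rtranclp: "hred\<^sup>*\<^sup>* M L \<Longrightarrow> has_hnf L \<Longrightarrow> has_hnf M"
  unfolding has_hnf_def by (meson rtranclp_trans)

definition hred_if :: "bool \<Rightarrow> dB \<Rightarrow> dB \<Rightarrow> bool" where
  "hred_if s X Y \<longleftrightarrow> (\<exists>P Q. hred_lab X (P, Q) Y \<and> (s \<longrightarrow> simple_redex P Q))"

lemma hred_if_False: "hred_if False = hred"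
  by (auto simp: hred_def hred_if_def fun_eq_iff)

lemma hred_if_True: "hred_if True = hred_simple"
  by (auto simp: hred_simple_def hred_if_def fun_eq_iff)

lemma hred_if_pow_hred_pow: "(hred_if s ^^ n) x y \<Longrightarrow> (hred ^^ n) x y"
  by (rule relpowp_mono) (auto simp: hred_def hred_if_def)

lemma simple_term_hnfD:
  assumes "simple_term A" "has_hnf A"
  shows "(hred_simple ^^ hnf_steps A) A (hnf_of A) \<and> (\<forall>R\<in>set (hnf_args (hnf_of A)). simple_term R)"
  using assms(1)
proof (cases rule: simple_term.cases)
  case simple_hnf
  then obtain j where j: "(hred_simple ^^ j) A (hnf_of A)"
    by (auto dest: rtranclp_imp_relpowp)
  have "j = hnf_steps A"
    using hnf_unique[OF hred_if_pow_hred_pow[OF j[folded hred_if_True]]] has_hnf_hred_pow[OF assms(2)]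
    by auto
  then show ?thesis using j simple_hnf by auto
qed (use assms in simp)

inductive beta_pow_list :: "nat \<Rightarrow> dB list \<Rightarrow> dB list \<Rightarrow> bool" where
  Nil: "beta_pow_list 0 [] []"
| Cons: "beta_pow_list n Rs Rs' \<Longrightarrow> (beta ^^ m) R R' \<Longrightarrow> beta_pow_list (m + n) (R # Rs) (R' # Rs')"

lemma beta_pow_list_refl: "beta_pow_list 0 Rs Rs"
  by (induct Rs) (auto intro: beta_pow_list.Cons[where m=0, simplified] beta_pow_list.Nil)

lemma beta_pow_list_Cons_head: "beta R R' \<Longrightarrow> beta_pow_list 1 (R # Rs) (R' # Rs)"
  using beta_pow_list.Cons[OF beta_pow_list_refl, of 1 R R' Rs] by (simp del: relpowp.simps)

lemma beta_pow_list_Cons_tail: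
  "beta_pow_list n Rs Rs' \<Longrightarrow> beta_pow_list n (R # Rs) (R # Rs')"
  using beta_pow_list.Cons[of n Rs Rs' 0 R R] by simp

lemma beta_pow_list_trans:
  "beta_pow_list n A B \<Longrightarrow> beta_pow_list m B C \<Longrightarrow> beta_pow_list (n + m) A C"
proof (induct arbitrary: m C rule: beta_pow_list.induct)
  case (Cons n Rs Rs' k R R')
  from Cons(4) obtain m1 m2 C1 R'' where "C = R'' # C1" "m = m1 + m2"
    "beta_pow_list m2 Rs' C1" "(beta ^^ m1) R' R''"
    by (cases rule: beta_pow_list.cases) auto
  then have "beta_pow_list ((k + m1) + (n + m2)) (R # Rs) (R'' # C1)"
    using Cons(2)[of m2 C1] relpowp_trans[OF Cons(3)] beta_pow_list.Cons by blast
  then show ?case using \<open>C = R'' # C1\<close> \<open>m = m1 + m2\<close> by (simp add: algebra_simps)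
qed simp

lemma beta_pow_list_length: "beta_pow_list n A B \<Longrightarrow> length A = length B"
  by (induct rule: beta_pow_list.induct) auto

lemma beta_pow_apps_args: "beta_pow_list n Rs Rs' \<Longrightarrow> (beta ^^ n) (apps X Rs) (apps X Rs')"
proof (induct rule: beta_pow_list.induct)
  case (Cons n Rs Rs' m R R')
  then show ?case using beta_pow_App[OF Cons(2) Cons(3)] by (simp add: add.commute)
qed simp

lemma beta_pow_hplug:
  assumes "(beta ^^ m) X X'" "beta_pow_list n Rs Rs'"
  shows "(beta ^^ (m + n)) (hplug a Rs X) (hplug a Rs' X')"
proof -
  have "(beta ^^ m) (apps X Rs) (apps X' Rs)"
    by (rule relpowp_map[OF _ assms(1)]) (induct Rs; auto intro: beta.intros)
  then have "(beta ^^ (m + n)) (apps X Rs) (apps X' Rs')"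
    by (rule relpowp_trans[OF _ beta_pow_apps_args[OF assms(2)]])
  then show ?thesis unfolding hplug_def by (induct a) (auto intro: beta_pow_Abs)
qed

lemma beta_pow_contractum:
  "(beta ^^ nP) P P' \<Longrightarrow> (beta ^^ nQ) Q Q' \<Longrightarrow> beta_pow_list nR Rs Rs' \<Longrightarrow>
    (beta ^^ (occs 0 P * nQ + nP + nR)) (hplug a Rs (dsubst P Q 0)) (hplug a Rs' (dsubst P' Q' 0))"
  by (rule beta_pow_hplug[OF relpowp_trans[OF beta_pow_subst_right beta_pow_subst_left]])

lemma beta_Abs_pow_cases: "beta ((Abs ^^ a) s) B \<Longrightarrow> \<exists>s'. B = (Abs ^^ a) s' \<and> beta s s'"
proof (induct a arbitrary: B)
  case (Suc a)
  from Suc.prems have "beta (Abs ((Abs ^^ a) s)) B" by simp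
  then obtain t where "B = Abs t" "beta ((Abs ^^ a) s) t" using beta_Abs_cases by blast
  then show ?case using Suc.hyps by fastforce
qed simp

lemma beta_apps_Var_cases:
  "beta (apps (Var y) Rs) B \<Longrightarrow> \<exists>Rs'. B = apps (Var y) Rs' \<and> beta_pow_list 1 Rs Rs'"
proof (induct Rs arbitrary: B)
  case Nil then show ?case using not_beta_Var by simp
next
  case (Cons R Rs)
  have "apps (Var y) Rs \<noteq> Abs P" for P by (cases Rs) auto
  with Cons.prems consider
      t where "beta (apps (Var y) Rs) t" "B = App t R"
    | t where "beta R t" "B = App (apps (Var y) Rs) t"
    using beta_App_cases[of "apps (Var y) Rs" R B] by auto
  then show ?case
  proof cases
    case 1
    then show ?thesis using Cons.hyps beta_pow_list_Cons_tail by (metis apps.simps(2))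
  next
    case 2
    then show ?thesis using beta_pow_list_Cons_head[of R t Rs] by (metis apps.simps(2))
  qed
qed

lemma beta_pow_hnf:
  "(beta ^^ n) (hplug a Rs (Var y)) B \<Longrightarrow> \<exists>Rs'. B = hplug a Rs' (Var y) \<and> beta_pow_list n Rs Rs'"
proof (induct n arbitrary: B)
  case 0 then show ?case by (auto intro: beta_pow_list_refl)
next
  case (Suc n)
  then obtain Rs0 B0 where "beta_pow_list n Rs Rs0" "beta (hplug a Rs0 (Var y)) B" by auto
  moreover from this(2) obtain Rs' where "B = hplug a Rs' (Var y)" "beta_pow_list 1 Rs0 Rs'"
    unfolding hplug_def by (metis beta_Abs_pow_cases beta_apps_Var_cases)
  ultimately show ?case using beta_pow_list_trans by fastforce
qed

lemma beta_apps_redex_cases: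
  "beta (apps (App (Abs P) Q) Rs) B \<Longrightarrow>
     B = apps (dsubst P Q 0) Rs \<or>
     (\<exists>P'. beta P P' \<and> B = apps (App (Abs P') Q) Rs) \<or>
     (\<exists>Q'. beta Q Q' \<and> B = apps (App (Abs P) Q') Rs) \<or>
     (\<exists>Rs'. beta_pow_list 1 Rs Rs' \<and> B = apps (App (Abs P) Q) Rs')"
proof (induct Rs arbitrary: B)
  case Nil
  then show ?case by (auto dest!: beta_App_cases beta_Abs_cases)
next
  case (Cons R Rs)
  have "apps (App (Abs P) Q) Rs \<noteq> Abs P0" for P0 by (cases Rs) auto
  with Cons.prems consider
      t where "beta (apps (App (Abs P) Q) Rs) t" "B = App t R"
    | t where "beta R t" "B = App (apps (App (Abs P) Q) Rs) t"
    using beta_App_cases[of "apps (App (Abs P) Q) Rs" R B] by auto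
  then show ?case
  proof cases
    case 1
    from Cons.hyps[OF 1(1)] show ?thesis
    proof (elim disjE exE conjE)
      fix Rs' assume "beta_pow_list 1 Rs Rs'" "t = apps (App (Abs P) Q) Rs'"
      then show ?thesis using 1(2) beta_pow_list_Cons_tail
        by (intro disjI2 exI[of _ "R # Rs'"]) auto
    qed (use 1(2) in auto)
  next
    case 2
    then show ?thesis using beta_pow_list_Cons_head[of R t Rs]
      by (intro disjI2 exI[of _ "t # Rs"]) simp
  qed
qed

lemma beta_head_redex_cases:
  "beta (hplug a Rs (App (Abs P) Q)) B \<Longrightarrow>
     B = hplug a Rs (dsubst P Q 0) \<or>
     (\<exists>P'. beta P P' \<and> B = hplug a Rs (App (Abs P') Q)) \<or>
     (\<exists>Q'. beta Q Q' \<and> B = hplug a Rs (App (Abs P) Q')) \<or>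
     (\<exists>Rs'. beta_pow_list 1 Rs Rs' \<and> B = hplug a Rs' (App (Abs P) Q))"
  unfolding hplug_def by (drule beta_Abs_pow_cases) (auto dest!: beta_apps_redex_cases)

lemma beta_pow_head_redex_cases:
  "(beta ^^ n) (hplug a Rs (App (Abs P) Q)) B \<Longrightarrow>
    (\<exists>P' Q' Rs' nP nQ nR. B = hplug a Rs' (App (Abs P') Q') \<and> (beta ^^ nP) P P' \<and>
        (beta ^^ nQ) Q Q' \<and> beta_pow_list nR Rs Rs' \<and> nP + nQ + nR = n) \<or>
    (\<exists>P' Q' Rs' nP nQ nR m. (beta ^^ m) (hplug a Rs' (dsubst P' Q' 0)) B \<and> (beta ^^ nP) P P' \<and>
        (beta ^^ nQ) Q Q' \<and> beta_pow_list nR Rs Rs' \<and> nP + nQ + nR + 1 + m = n)"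
proof (induct n arbitrary: B)
  case 0
  then show ?case
    by (intro disjI1 exI[of _ P] exI[of _ Q] exI[of _ Rs] exI[of _ 0]) (auto intro: beta_pow_list_refl)
next
  case (Suc n)
  from Suc.prems obtain B0 where B0: "(beta ^^ n) (hplug a Rs (App (Abs P) Q)) B0" "beta B0 B"
    by auto
  from Suc.hyps[OF B0(1)] show ?case
  proof (elim disjE exE conjE)
    fix P' Q' Rs' nP nQ nR
    assume h: "B0 = hplug a Rs' (App (Abs P') Q')" "(beta ^^ nP) P P'" "(beta ^^ nQ) Q Q'"
      "beta_pow_list nR Rs Rs'" "nP + nQ + nR = n"
    from beta_head_redex_cases[OF B0(2)[unfolded h(1)]] show ?case
    proof (elim disjE exE conjE)
      assume "B = hplug a Rs' (dsubst P' Q' 0)"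
      then show ?case using h
        by (intro disjI2 exI[of _ P'] exI[of _ Q'] exI[of _ Rs'] exI[of _ nP] exI[of _ nQ]
            exI[of _ nR] exI[of _ 0]) auto
    next
      fix P'' assume "beta P' P''" "B = hplug a Rs' (App (Abs P'') Q')"
      then show ?case using h relpowp_Suc_I[of nP beta P P' P'']
        by (intro disjI1 exI[of _ P''] exI[of _ Q'] exI[of _ Rs'] exI[of _ "Suc nP"] exI[of _ nQ]
            exI[of _ nR]) auto
    next
      fix Q'' assume "beta Q' Q''" "B = hplug a Rs' (App (Abs P') Q'')"
      then show ?case using h relpowp_Suc_I[of nQ beta Q Q' Q'']
        by (intro disjI1 exI[of _ P'] exI[of _ Q''] exI[of _ Rs'] exI[of _ nP] exI[of _ "Suc nQ"]
            exI[of _ nR]) auto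
    next
      fix Rs'' assume "beta_pow_list 1 Rs' Rs''" "B = hplug a Rs'' (App (Abs P') Q')"
      then show ?case using h beta_pow_list_trans[of nR Rs Rs' 1 Rs'']
        by (intro disjI1 exI[of _ P'] exI[of _ Q'] exI[of _ Rs''] exI[of _ nP] exI[of _ nQ]
            exI[of _ "nR + 1"]) auto
    qed
  next
    fix P' Q' Rs' nP nQ nR m
    assume h: "(beta ^^ m) (hplug a Rs' (dsubst P' Q' 0)) B0" "(beta ^^ nP) P P'"
      "(beta ^^ nQ) Q Q'" "beta_pow_list nR Rs Rs'" "nP + nQ + nR + 1 + m = n"
    then show ?case using B0(2) relpowp_Suc_I[of m beta _ B0 B]
      by (intro disjI2 exI[of _ P'] exI[of _ Q'] exI[of _ Rs'] exI[of _ nP] exI[of _ nQ]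
          exI[of _ nR] exI[of _ "Suc m"]) auto
  qed
qed

section \<open>Projecting head reductions along beta reductions\<close>

text \<open>One head step \<open>A \<rightarrow> A\<^sub>1\<close> is matched by at most one head step \<open>B \<rightarrow> B\<^sub>1\<close> such that
  \<open>A\<^sub>1 \<rightarrow>\<^sup>c B\<^sub>1\<close>. For a simple redex the steps inside the argument are not duplicated, so the
  reduction \<open>A \<rightarrow>\<^sup>n B\<close> pays for \<open>A\<^sub>1 \<rightarrow>\<^sup>c B\<^sub>1\<close>, and also for the head step if \<open>B\<close> needs none.\<close>
lemma hred_lab_projection:
  assumes "hred_lab A (P, Q) A1" and "(beta ^^ n) A B"
  obtains e B1 c where "(hred ^^ e) B B1" "e \<le> 1" "(beta ^^ c) A1 B1"
    "simple_redex P Q \<Longrightarrow> c + 1 \<le> n + e"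
proof -
  obtain a Rs where A: "A = hplug a Rs (App (Abs P) Q)" and A1: "A1 = hplug a Rs (dsubst P Q 0)"
    using assms(1) hred_lab_iff_hplug by blast
  from beta_pow_head_redex_cases[OF assms(2)[unfolded A]] show thesis
  proof (elim disjE exE conjE)
    fix P' Q' Rs' nP nQ nR
    assume B: "B = hplug a Rs' (App (Abs P') Q')" and n: "nP + nQ + nR = n" and
      red: "(beta ^^ nP) P P'" "(beta ^^ nQ) Q Q'" "beta_pow_list nR Rs Rs'"
    have hB: "(hred ^^ 1) B (hplug a Rs' (dsubst P' Q' 0))"
      unfolding B relpowp_1 by (rule hred_hplug)
    have hA1: "(beta ^^ (occs 0 P * nQ + nP + nR)) A1 (hplug a Rs' (dsubst P' Q' 0))"
      unfolding A1 by (rule beta_pow_contractum[OF red])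
    have cost: "simple_redex P Q \<Longrightarrow> occs 0 P * nQ + nP + nR + 1 \<le> n + 1"
      using simple_redex_copies[OF _ red(2)] n by fastforce
    show thesis by (rule that[OF hB _ hA1 cost]) simp
  next
    fix P' Q' Rs' nP nQ nR m
    assume B: "(beta ^^ m) (hplug a Rs' (dsubst P' Q' 0)) B" and n: "nP + nQ + nR + 1 + m = n" and
      red: "(beta ^^ nP) P P'" "(beta ^^ nQ) Q Q'" "beta_pow_list nR Rs Rs'"
    have "(beta ^^ (occs 0 P * nQ + nP + nR + m)) A1 B"
      unfolding A1 by (rule relpowp_trans[OF beta_pow_contractum[OF red] B])
    moreover have "simple_redex P Q \<Longrightarrow> occs 0 P * nQ + nP + nR + m + 1 \<le> n + 0"
      using simple_redex_copies[OF _ red(2)] n by fastforce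
    ultimately show thesis by (intro that[of 0 B]) auto
  qed
qed

lemma hred_pow_projection:
  assumes "(hred_if s ^^ k) A H" "is_hnf H" "(beta ^^ n) A B"
  shows "\<exists>j a y Rs Rs' c. (hred ^^ j) B (hplug a Rs' (Var y)) \<and> H = hplug a Rs (Var y) \<and>
     beta_pow_list c Rs Rs' \<and> j \<le> k \<and> (s \<longrightarrow> c + (k - j) \<le> n)"
  using assms
proof (induct k arbitrary: A n B)
  case 0
  obtain a Rs y where H: "H = hplug a Rs (Var y)" using is_hnf_imp_hplug_Var[OF 0(2)] by blast
  have "(beta ^^ n) (hplug a Rs (Var y)) B" using 0(1,3) H by simp
  then obtain Rs' where "B = hplug a Rs' (Var y)" "beta_pow_list n Rs Rs'"
    using beta_pow_hnf by blast
  then show ?case using H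
    by (intro exI[of _ 0] exI[of _ a] exI[of _ y] exI[of _ Rs] exI[of _ Rs'] exI[of _ n]) simp
next
  case (Suc k)
  from Suc.prems(1) obtain A1 where "hred_if s A A1" "(hred_if s ^^ k) A1 H"
    by (metis relpowp_Suc_D2)
  then obtain P Q where A1: "hred_lab A (P, Q) A1" "s \<longrightarrow> simple_redex P Q" "(hred_if s ^^ k) A1 H"
    unfolding hred_if_def by blast
  obtain e B1 c where B1: "(hred ^^ e) B B1" "e \<le> 1" "(beta ^^ c) A1 B1"
    "simple_redex P Q \<Longrightarrow> c + 1 \<le> n + e"
    using hred_lab_projection[OF A1(1) Suc.prems(3)] by blast
  obtain j a y Rs Rs' c' where IH: "(hred ^^ j) B1 (hplug a Rs' (Var y))" "H = hplug a Rs (Var y)"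
    "beta_pow_list c' Rs Rs'" "j \<le> k" "s \<longrightarrow> c' + (k - j) \<le> c"
    using Suc.hyps[OF A1(3) Suc.prems(2) B1(3)] by blast
  have "(hred ^^ (e + j)) B (hplug a Rs' (Var y))" by (rule relpowp_trans[OF B1(1) IH(1)])
  moreover have "s \<longrightarrow> c' + (Suc k - (e + j)) \<le> n"
  proof
    assume s
    then have "c + 1 \<le> n + e" "c' + (k - j) \<le> c" using A1(2) B1(4) IH(5) by auto
    then show "c' + (Suc k - (e + j)) \<le> n" using B1(2) IH(4) by linarith
  qed
  moreover have "e + j \<le> Suc k" using B1(2) IH(4) by simp
  ultimately show ?case using IH(2,3) by blast
qed

lemma beta_pow_hnf_projection:
  assumes "(beta ^^ m) A B" "has_hnf A" "s \<longrightarrow> simple_term A"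
  obtains a y Rs Rs' c where "has_hnf B"
    "hnf_of A = hplug a Rs (Var y)" "hnf_of B = hplug a Rs' (Var y)" "beta_pow_list c Rs Rs'"
    "hnf_steps B \<le> hnf_steps A" "s \<longrightarrow> c + (hnf_steps A - hnf_steps B) \<le> m"
    "s \<longrightarrow> (\<forall>R\<in>set Rs. simple_term R)"
proof -
  have hA: "(hred ^^ hnf_steps A) A (hnf_of A)" "is_hnf (hnf_of A)"
    using has_hnf_hred_pow[OF assms(2)] by auto
  have "(hred_if s ^^ hnf_steps A) A (hnf_of A)"
    using hA(1) simple_term_hnfD[OF _ assms(2)] assms(3)
    by (cases s) (simp_all add: hred_if_False hred_if_True)
  from hred_pow_projection[OF this hA(2) assms(1)] obtain j a y Rs Rs' c where
    F: "(hred ^^ j) B (hplug a Rs' (Var y))" "hnf_of A = hplug a Rs (Var y)"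
       "beta_pow_list c Rs Rs'" "j \<le> hnf_steps A" "s \<longrightarrow> c + (hnf_steps A - j) \<le> m"
    by blast
  have hB: "has_hnf B" "hnf_steps B = j" "hnf_of B = hplug a Rs' (Var y)"
    using hnf_of_hnf_stepsI[OF F(1) is_hnf_hplug_Var] by auto
  have "s \<longrightarrow> (\<forall>R\<in>set Rs. simple_term R)"
    using simple_term_hnfD[OF _ assms(2)] assms(3) F(2) by (auto simp: hnf_args_hplug_Var)
  then show thesis using that hB F by simp
qed

section \<open>Head normal forms are reflected by reduction\<close>

definition whred :: "dB \<Rightarrow> dB \<Rightarrow> bool" where
  "whred M M' \<longleftrightarrow> (\<exists>P Q Rs. M = apps (App (Abs P) Q) Rs \<and> M' = apps (dsubst P Q 0) Rs)"

lemma whred_hred: "whred M M' \<Longrightarrow> hred M M'"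
  unfolding whred_def hred_def using hred_lab_apps by blast

lemma whred_apps: "whred M L \<Longrightarrow> whred (apps M Rs) (apps L Rs)"
  unfolding whred_def by (metis apps_apps)

lemma whred_subst: "whred M L \<Longrightarrow> whred (dsubst M t k) (dsubst L t k)"
  unfolding whred_def
proof (elim exE conjE)
  fix P Q Rs assume e: "M = apps (App (Abs P) Q) Rs" "L = apps (dsubst P Q 0) Rs"
  have "dsubst (dsubst P Q 0) t k = dsubst (dsubst P (dlift t 0) (Suc k)) (dsubst Q t k) 0"
    using subst_subst[of 0 k P t Q] by simp
  then show "\<exists>P Q Rs. dsubst M t k = apps (App (Abs P) Q) Rs \<and> dsubst L t k = apps (dsubst P Q 0) Rs"
    using e by (auto simp: dsubst_apps)
qed

text \<open>Parallel reduction that does not contract the weak head redex.\<close>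
inductive par_internal :: "dB \<Rightarrow> dB \<Rightarrow> bool" where
  Abs: "par b b' \<Longrightarrow> par_internal (Abs b) (Abs b')"
| Var: "list_all2 par Rs Rs' \<Longrightarrow> par_internal (apps (Var y) Rs) (apps (Var y) Rs')"
| Redex: "par P P' \<Longrightarrow> par Q Q' \<Longrightarrow> list_all2 par Rs Rs' \<Longrightarrow>
    par_internal (apps (App (Abs P) Q) Rs) (apps (App (Abs P') Q') Rs')"

definition whd_split :: "dB \<Rightarrow> dB \<Rightarrow> bool" where
  "whd_split M N \<longleftrightarrow> (\<exists>L. whred\<^sup>*\<^sup>* M L \<and> par_internal L N)"

lemma whd_split_whred: "whred\<^sup>*\<^sup>* M M1 \<Longrightarrow> whd_split M1 N \<Longrightarrow> whd_split M N"
  unfolding whd_split_def by (meson rtranclp_trans)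

lemma par_internal_whd_split: "par_internal L N \<Longrightarrow> whd_split L N"
  unfolding whd_split_def by blast

lemma par_internal_apps:
  "par_internal L N \<Longrightarrow> list_all2 par Rs Rs' \<Longrightarrow> par_internal (apps L Rs) (apps N Rs')"
proof (induct rule: par_internal.induct)
  case (Abs b b')
  show ?case
  proof (cases Rs rule: rev_exhaust)
    case Nil then show ?thesis using Abs par_internal.Abs by simp
  next
    case (snoc Rs0 Q)
    with Abs(2) obtain Rs0' Q' where e: "Rs' = Rs0' @ [Q']" "list_all2 par Rs0 Rs0'" "par Q Q'"
      by (auto simp: list_all2_append1 list_all2_Cons1)
    have "par_internal (apps (App (Abs b) Q) Rs0) (apps (App (Abs b') Q') Rs0')"
      by (rule par_internal.Redex[OF Abs(1) e(3) e(2)])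
    then show ?thesis using snoc e(1) by (simp only: apps_snoc)
  qed
next
  case (Var Rs0 Rs0' y)
  have "par_internal (apps (Var y) (Rs @ Rs0)) (apps (Var y) (Rs' @ Rs0'))"
    by (rule par_internal.Var, rule list_all2_appendI) fact+
  then show ?case by (simp only: apps_apps)
next
  case (Redex P P' Q Q' Rs0 Rs0')
  have "par_internal (apps (App (Abs P) Q) (Rs @ Rs0)) (apps (App (Abs P') Q') (Rs' @ Rs0'))"
    by (rule par_internal.Redex, fact, fact, rule list_all2_appendI) fact+
  then show ?case by (simp only: apps_apps)
qed

lemma whd_split_apps:
  "whd_split M N \<Longrightarrow> list_all2 par Rs Rs' \<Longrightarrow> whd_split (apps M Rs) (apps N Rs')"
  unfolding whd_split_def
  using rtranclp_map[of whred whred "\<lambda>x. apps x Rs"] whred_apps par_internal_apps by blast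

lemma whd_split_subst:
  assumes "whd_split s s'" "par t t'" "whd_split t t'"
  shows "whd_split (dsubst s t k) (dsubst s' t' k)"
proof -
  from assms(1) obtain L where L: "whred\<^sup>*\<^sup>* s L" "par_internal L s'"
    unfolding whd_split_def by blast
  have args: "list_all2 par (map (\<lambda>R. dsubst R t k) Rs) (map (\<lambda>R. dsubst R t' k) Rs')"
    if "list_all2 par Rs Rs'" for Rs Rs'
    using that par_subst[OF _ assms(2)] by (auto simp: list_all2_map1 list_all2_map2 elim: list_all2_mono)
  have "whd_split (dsubst L t k) (dsubst s' t' k)"
    using L(2)
  proof (cases rule: par_internal.cases)
    case (Abs b b')
    then show ?thesis
      by (auto intro!: par_internal_whd_split par_internal.Abs par_subst par_lift assms(2))
  next
    case (Var Rs Rs' y)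
    consider "y = k" | "y \<noteq> k" by blast
    then show ?thesis
    proof cases
      case 1
      then show ?thesis using Var whd_split_apps[OF assms(3) args] by (simp add: dsubst_apps)
    next
      case 2
      then show ?thesis using Var par_internal.Var[OF args]
        by (auto simp: dsubst_apps intro: par_internal_whd_split)
    qed
  next
    case (Redex P P' Q Q' Rs Rs')
    then show ?thesis
      by (auto simp: dsubst_apps intro!: par_internal_whd_split par_internal.Redex args
          par_subst par_lift assms(2))
  qed
  then show ?thesis
    using whd_split_whred rtranclp_map[of whred whred "\<lambda>x. dsubst x t k"] whred_subst L(1) by blast
qed

text \<open>Takahashi's factorisation of parallel reduction into weak head steps and an internal step.\<close>
lemma par_whd_split: "par M N \<Longrightarrow> whd_split M N"
proof (induct rule: par.induct)
  case (par_Var n)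
  then show ?case using par_internal.Var[of "[]" "[]" n] by (auto intro: par_internal_whd_split)
next
  case (par_Abs s s')
  then show ?case by (auto intro: par_internal_whd_split par_internal.Abs)
next
  case (par_App s s' t t')
  then show ?case using whd_split_apps[of s s' "[t]" "[t']"] by simp
next
  case (par_beta s s' t t')
  have "whred (App (Abs s) t) (dsubst s t 0)"
    unfolding whred_def by (rule exI[of _ s], rule exI[of _ t], rule exI[of _ "[]"]) simp
  then show ?case using whd_split_subst[OF par_beta(2,3,4), of 0] whd_split_whred by blast
qed

lemma par_apps: "par X X' \<Longrightarrow> list_all2 par Rs Rs' \<Longrightarrow> par (apps X Rs) (apps X' Rs')"
  by (induct Rs arbitrary: Rs') (auto simp: list_all2_Cons1 intro!: par.par_App)

text \<open>Induction on the length of the head reduction of \<open>N\<close>, and inside on the size of \<open>N\<close>: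
  the abstraction case keeps the length and shrinks \<open>N\<close>.\<close>
lemma par_has_hnf_reflect: "par M N \<Longrightarrow> (hred ^^ k) N H \<Longrightarrow> is_hnf H \<Longrightarrow> has_hnf M"
proof (induct k arbitrary: M N H rule: less_induct)
  case (less k)
  note shorter = less.hyps
  show ?case using less.prems
  proof (induct "size N" arbitrary: M N H rule: less_induct)
    case less
    from par_whd_split[OF less.prems(1)] obtain L where L: "whred\<^sup>*\<^sup>* M L" "par_internal L N"
      unfolding whd_split_def by blast
    have "has_hnf L" using L(2)
    proof (cases rule: par_internal.cases)
      case (Abs b b')
      then obtain H' where "(hred ^^ k) b' H'" "is_hnf H'"
        using hred_Abs_pow less.prems(2,3) by fastforce
      then show ?thesis using Abs less.hyps[of b' b H'] has_hnf_Abs by simp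
    next
      case (Var Rs Rs' y)
      then show ?thesis using is_hnf_hplug_Var[of 0 Rs y] by (auto simp: has_hnf_def)
    next
      case (Redex P P' Q Q' Rs Rs')
      then have "\<not> is_hnf N" using not_is_hnf_hplug_redex[of 0 Rs' P' Q'] by simp
      then obtain k' where "k = Suc k'" using less.prems(2,3) by (cases k) auto
      with less.prems(2) obtain N1 where k: "k = Suc k'" "hred N N1" "(hred ^^ k') N1 H"
        by (metis relpowp_Suc_D2)
      have "hred N (apps (dsubst P' Q' 0) Rs')" using Redex whred_hred unfolding whred_def by blast
      then have "N1 = apps (dsubst P' Q' 0) Rs'" using k(2) hred_deterministic by blast
      moreover have "par (apps (dsubst P Q 0) Rs) (apps (dsubst P' Q' 0) Rs')"
        by (rule par_apps[OF par_subst[OF Redex(3,4)] Redex(5)])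
      ultimately have "has_hnf (apps (dsubst P Q 0) Rs)"
        using less.prems(3) k(1,3) by (intro shorter[of k']) auto
      moreover have "hred L (apps (dsubst P Q 0) Rs)"
        using Redex whred_hred unfolding whred_def by blast
      ultimately show ?thesis using has_hnf_hred_rtranclp by blast
    qed
    then show ?case
      using has_hnf_hred_rtranclp rtranclp_mono[of whred hred] whred_hred L(1) by blast
  qed
qed

lemma has_hnf_beta_reflect: "beta\<^sup>*\<^sup>* M N \<Longrightarrow> has_hnf N \<Longrightarrow> has_hnf M"
proof (induct rule: converse_rtranclp_induct)
  case (step y z)
  then show ?case using par_has_hnf_reflect beta_into_par has_hnf_hred_pow by blast
qed

section \<open>Clocked Boehm trees along a reduction\<close>

text \<open>\<open>cursor_sim s n c c'\<close>: the node \<open>c'\<close> of the tree of a reduct corresponds to the node \<open>c\<close>.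
  When \<open>s\<close> is set, the source is simple and \<open>n\<close> bounds the reduction steps spent below
  \<open>c\<close>.\<close>
inductive cursor_sim :: "bool \<Rightarrow> nat \<Rightarrow> cursor \<Rightarrow> cursor \<Rightarrow> bool" where
  Root: "(beta ^^ m) A B \<Longrightarrow> (s \<longrightarrow> m \<le> n \<and> simple_term A) \<Longrightarrow> cursor_sim s n (CRoot A) (CRoot B)"
| Inner: "beta_pow_list c Rs Rs' \<Longrightarrow> (s \<longrightarrow> c \<le> n \<and> (\<forall>R\<in>set Rs. simple_term R)) \<Longrightarrow>
    cursor_sim s n (CInner (hplug a Rs (Var y))) (CInner (hplug a Rs' (Var y)))"

definition clock_decreases :: "cursor \<Rightarrow> cursor \<Rightarrow> bool" where
  "clock_decreases c c' \<longleftrightarrow> (\<exists>a b. cursor_ann c = Some a \<and> cursor_ann c' = Some b \<and> b < a)"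

lemma spine_step_sim:
  assumes "beta_pow_list c Rs Rs'" "s \<longrightarrow> (\<forall>R\<in>set Rs. simple_term R)"
  shows "(\<forall>d. spine_step (hplug a Rs (Var y)) d = None \<longleftrightarrow> spine_step (hplug a Rs' (Var y)) d = None) \<and>
    (\<exists>f. (\<forall>d x x'. spine_step (hplug a Rs (Var y)) d = Some x \<longrightarrow>
        spine_step (hplug a Rs' (Var y)) d = Some x' \<longrightarrow> cursor_sim s (f d) x x') \<and>
      f 0 + f 1 + f 2 \<le> c)"
proof (cases a)
  case (Suc a')
  have "cursor_sim s c (CInner (hplug a' Rs (Var y))) (CInner (hplug a' Rs' (Var y)))"
    by (rule cursor_sim.Inner[OF assms(1)]) (use assms(2) in simp)
  then show ?thesis using Suc by (intro conjI exI[of _ "\<lambda>d. if d = 0 then c else 0"]) auto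
next
  case 0
  show ?thesis
  proof (cases Rs)
    case Nil
    then have "Rs' = []" using beta_pow_list_length[OF assms(1)] by simp
    then show ?thesis using 0 Nil by (intro conjI exI[of _ "\<lambda>d. 0"]) auto
  next
    case (Cons R Rs0)
    from assms(1)[unfolded Cons] obtain m1 c0 R' Rs0' where
      e: "Rs' = R' # Rs0'" "c = m1 + c0" "beta_pow_list c0 Rs0 Rs0'" "(beta ^^ m1) R R'"
      by (cases rule: beta_pow_list.cases) auto
    have "cursor_sim s c0 (CInner (hplug 0 Rs0 (Var y))) (CInner (hplug 0 Rs0' (Var y)))"
      by (rule cursor_sim.Inner[OF e(3)]) (use assms(2) Cons in simp)
    moreover have "cursor_sim s m1 (CRoot R) (CRoot R')"
      by (rule cursor_sim.Root[OF e(4)]) (use assms(2) Cons in simp)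
    ultimately show ?thesis using 0 Cons e
      by (intro conjI exI[of _ "\<lambda>d. if d = 1 then c0 else if d = 2 then m1 else 0"]) auto
  qed
qed

text \<open>The budget of a node pays for those of its children and for a decrease of its clock.\<close>
lemma cursor_step_sim:
  assumes "cursor_sim s n c c'"
  shows "(\<forall>d. cursor_step c d = None \<longleftrightarrow> cursor_step c' d = None) \<and>
    (\<exists>f. (\<forall>d x x'. cursor_step c d = Some x \<longrightarrow> cursor_step c' d = Some x' \<longrightarrow> cursor_sim s (f d) x x') \<and>
       (s \<longrightarrow> f 0 + f 1 + f 2 + of_bool (clock_decreases c c') \<le> n))"
  using assms
proof (cases rule: cursor_sim.cases)
  case (Root m A B)
  show ?thesis
  proof (cases "has_hnf A")
    case False
    then have "\<not> has_hnf B" using has_hnf_beta_reflect[OF relpowp_imp_rtranclp[OF Root(3)]] by blast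
    then show ?thesis using False Root
      by (intro conjI exI[of _ "\<lambda>d. 0"]) (auto simp: clock_decreases_def)
  next
    case True
    have "s \<longrightarrow> simple_term A" using Root(4) by simp
    from beta_pow_hnf_projection[OF Root(3) True this] obtain a y Rs Rs' k where
      F: "has_hnf B" "hnf_of A = hplug a Rs (Var y)" "hnf_of B = hplug a Rs' (Var y)"
        "beta_pow_list k Rs Rs'" "hnf_steps B \<le> hnf_steps A"
        "s \<longrightarrow> k + (hnf_steps A - hnf_steps B) \<le> m" "s \<longrightarrow> (\<forall>R\<in>set Rs. simple_term R)" .
    from spine_step_sim[OF F(4,7), of a y] obtain f where
      f: "\<forall>d. spine_step (hplug a Rs (Var y)) d = None \<longleftrightarrow> spine_step (hplug a Rs' (Var y)) d = None"
        "\<forall>d x x'. spine_step (hplug a Rs (Var y)) d = Some x \<longrightarrow>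
           spine_step (hplug a Rs' (Var y)) d = Some x' \<longrightarrow> cursor_sim s (f d) x x'"
        "f 0 + f 1 + f 2 \<le> k"
      by blast
    have "of_bool (clock_decreases c c') \<le> hnf_steps A - hnf_steps B"
      using Root True F(1) by (auto simp: clock_decreases_def)
    then have "s \<longrightarrow> f 0 + f 1 + f 2 + of_bool (clock_decreases c c') \<le> n"
      using F(6) f(3) Root(4) by auto
    then show ?thesis using f(1,2) Root True F(1-3) by (intro conjI exI[of _ f]) auto
  qed
next
  case (Inner k Rs Rs' a y)
  from spine_step_sim[OF Inner(3), of s a y] Inner(4) obtain f where
    f: "\<forall>d. spine_step (hplug a Rs (Var y)) d = None \<longleftrightarrow> spine_step (hplug a Rs' (Var y)) d = None"
      "\<forall>d x x'. spine_step (hplug a Rs (Var y)) d = Some x \<longrightarrow>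
         spine_step (hplug a Rs' (Var y)) d = Some x' \<longrightarrow> cursor_sim s (f d) x x'"
      "f 0 + f 1 + f 2 \<le> k"
    by blast
  have "\<not> clock_decreases c c'" using Inner by (simp add: clock_decreases_def)
  then show ?thesis using f Inner by (intro conjI exI[of _ f]) auto
qed

lemma term_label_hplug_Var:
  "beta_pow_list k Rs Rs' \<Longrightarrow> term_label (hplug a Rs (Var y)) = term_label (hplug a Rs' (Var y))"
proof (cases a)
  case 0
  assume "beta_pow_list k Rs Rs'"
  then have "length Rs = length Rs'" by (rule beta_pow_list_length)
  then show ?thesis using 0 by (cases Rs; cases Rs') auto
qed simp

lemma cursor_label_sim:
  assumes "cursor_sim s n c c'"
  shows "cursor_label c = cursor_label c' \<and> (cursor_ann c = None \<longleftrightarrow> cursor_ann c' = None) \<and>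
    (\<forall>a b. cursor_ann c = Some a \<longrightarrow> cursor_ann c' = Some b \<longrightarrow> b \<le> a)"
  using assms
proof (cases rule: cursor_sim.cases)
  case (Root m A B)
  show ?thesis
  proof (cases "has_hnf A")
    case False
    then have "\<not> has_hnf B" using has_hnf_beta_reflect[OF relpowp_imp_rtranclp[OF Root(3)]] by blast
    then show ?thesis using False Root by simp
  next
    case True
    obtain a y Rs Rs' k where
      "has_hnf B" "hnf_of A = hplug a Rs (Var y)" "hnf_of B = hplug a Rs' (Var y)"
      "beta_pow_list k Rs Rs'" "hnf_steps B \<le> hnf_steps A"
      by (rule beta_pow_hnf_projection[OF Root(3) True, where s=False]) (simp, blast)
    then show ?thesis using True Root term_label_hplug_Var by simp
  qed
next
  case (Inner k Rs Rs' a y)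
  then show ?thesis using term_label_hplug_Var by simp
qed

lemma cursor_walk_sim:
  "cursor_sim s n c c' \<Longrightarrow> (cursor_walk c p = None \<longleftrightarrow> cursor_walk c' p = None) \<and>
    (\<forall>x x'. cursor_walk c p = Some x \<longrightarrow> cursor_walk c' p = Some x' \<longrightarrow> (\<exists>n'. cursor_sim s n' x x'))"
proof (induct p arbitrary: c c' n)
  case (Cons d p)
  from cursor_step_sim[OF Cons.prems] obtain f where
    f: "\<forall>d. cursor_step c d = None \<longleftrightarrow> cursor_step c' d = None"
       "\<forall>d x x'. cursor_step c d = Some x \<longrightarrow> cursor_step c' d = Some x' \<longrightarrow> cursor_sim s (f d) x x'"
    by blast
  show ?case
  proof (cases "cursor_step c d")
    case None
    moreover have "cursor_step c' d = None" using f(1) None by blast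
    ultimately show ?thesis by simp
  next
    case (Some x)
    have "cursor_step c' d \<noteq> None" using f(1) Some by (metis option.distinct(1))
    then obtain x' where x': "cursor_step c' d = Some x'" by blast
    then show ?thesis using Cons.hyps[of "f d" x x'] f(2) Some by simp
  qed
qed auto

definition drop_positions :: "cursor \<Rightarrow> cursor \<Rightarrow> nat list set" where
  "drop_positions c c' =
     {p. \<exists>x x'. cursor_walk c p = Some x \<and> cursor_walk c' p = Some x' \<and> clock_decreases x x'}"

lemma Nil_in_drop_positions: "[] \<in> drop_positions c c' \<longleftrightarrow> clock_decreases c c'"
  by (simp add: drop_positions_def)

lemma Cons_in_drop_positions:
  "d # p \<in> drop_positions c c' \<longleftrightarrow>
     (\<exists>x x'. cursor_step c d = Some x \<and> cursor_step c' d = Some x' \<and> p \<in> drop_positions x x')"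
  by (cases "cursor_step c d"; cases "cursor_step c' d") (auto simp: drop_positions_def)

lemma drop_positions_subset:
  "drop_positions c c' \<subseteq> {[]} \<union> (\<Union>d\<in>{0, 1, 2}. Cons d ` {p. d # p \<in> drop_positions c c'})"
proof
  fix p assume p: "p \<in> drop_positions c c'"
  show "p \<in> {[]} \<union> (\<Union>d\<in>{0, 1, 2}. Cons d ` {p. d # p \<in> drop_positions c c'})"
  proof (cases p)
    case (Cons d q)
    have spine: "spine_step H e = None" if "2 < e" for H e using that by (cases H) auto
    have "cursor_step c e = None" if "2 < e" for e using that spine by (cases c) auto
    then have "\<not> 2 < d" using p Cons by (auto simp: Cons_in_drop_positions)
    then have "d \<in> {0, 1, 2}" by auto
    then show ?thesis using p Cons by blast
  qed simp
qed

text \<open>Counting inside finite sets of bounded depth allows an induction on the depth before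
  finiteness of \<open>drop_positions\<close> is known.\<close>
lemma card_drop_positions_le:
  "cursor_sim True n c c' \<Longrightarrow> finite S \<Longrightarrow> \<forall>p\<in>S. length p < D \<Longrightarrow>
     card (S \<inter> drop_positions c c') \<le> n"
proof (induct D arbitrary: S c c' n)
  case 0
  then show ?case by simp
next
  case (Suc D)
  from cursor_step_sim[OF Suc.prems(1)] obtain f where
    f: "\<forall>d x x'. cursor_step c d = Some x \<longrightarrow> cursor_step c' d = Some x' \<longrightarrow> cursor_sim True (f d) x x'"
       "f 0 + f 1 + f 2 + of_bool (clock_decreases c c') \<le> n"
    by blast
  define T where "T d = Cons d -` S \<inter> {p. d # p \<in> drop_positions c c'}" for d
  have fin: "finite (Cons d -` S)" for d by (rule finite_vimageI) (use Suc.prems(2) in auto)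
  have T: "card (T d) \<le> f d" for d
  proof (cases "\<exists>x x'. cursor_step c d = Some x \<and> cursor_step c' d = Some x'")
    case True
    then obtain x x' where xx: "cursor_step c d = Some x" "cursor_step c' d = Some x'" by blast
    then have "T d = Cons d -` S \<inter> drop_positions x x'"
      by (auto simp: T_def Cons_in_drop_positions)
    moreover have "\<forall>p\<in>Cons d -` S. length p < D" using Suc.prems(3) by fastforce
    ultimately show ?thesis using Suc.hyps[OF f(1)[rule_format, OF xx] fin[of d]] by simp
  qed (auto simp: T_def Cons_in_drop_positions)
  have sub: "S \<inter> drop_positions c c' \<subseteq> (S \<inter> drop_positions c c' \<inter> {[]}) \<union> (\<Union>d\<in>{0, 1, 2}. Cons d ` T d)"
    using drop_positions_subset[of c c'] by (auto simp: T_def)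
  have "card (S \<inter> drop_positions c c') \<le>
      card (S \<inter> drop_positions c c' \<inter> {[]}) + card (\<Union>d\<in>{0, 1, 2}. Cons d ` T d)"
    using card_mono[OF _ sub] card_Un_le Suc.prems(2) fin by (auto simp: T_def intro: le_trans)
  also have "\<dots> \<le> card (S \<inter> drop_positions c c' \<inter> {[]}) + (\<Sum>d\<in>{0, 1, 2}. card (Cons d ` T d))"
    using card_UN_le[of "{0, 1, 2 :: nat}" "\<lambda>d. Cons d ` T d"] by simp
  also have "\<dots> \<le> of_bool (clock_decreases c c') + (\<Sum>d\<in>{0, 1, 2}. f d)"
  proof (rule add_mono)
    show "card (S \<inter> drop_positions c c' \<inter> {[]}) \<le> of_bool (clock_decreases c c')"
      by (cases "clock_decreases c c'") (auto simp: Nil_in_drop_positions card_le_Suc0_iff_eq)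
    show "(\<Sum>d\<in>{0, 1, 2}. card (Cons d ` T d)) \<le> (\<Sum>d\<in>{0, 1, 2}. f d)"
      by (rule sum_mono) (metis T card_image inj_onI list.inject)
  qed
  also have "\<dots> \<le> n" using f(2) by simp
  finally show ?case .
qed

lemma finite_drop_positions: "cursor_sim True n c c' \<Longrightarrow> finite (drop_positions c c')"
proof (rule ccontr)
  assume sim: "cursor_sim True n c c'" and "infinite (drop_positions c c')"
  then obtain S where S: "S \<subseteq> drop_positions c c'" "finite S" "card S = Suc n"
    using infinite_arbitrarily_large by blast
  have "\<forall>p\<in>S. length p < Suc (Max (length ` S))"
    using S(2) by (simp add: le_imp_less_Suc)
  from card_drop_positions_le[OF sim S(2) this] S show False by (simp add: Int_absorb2)
qed

lemma bt_ann_sim: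
  assumes "cursor_sim s n (CRoot A) (CRoot B)" "bt_label A p \<noteq> None"
  shows "(bt_ann A p = None \<and> bt_ann B p = None) \<or>
    (\<exists>a b. bt_ann A p = Some a \<and> bt_ann B p = Some b \<and> b \<le> a \<and>
       (p \<notin> drop_positions (CRoot A) (CRoot B) \<longrightarrow> a = b))"
proof -
  note walk = cursor_walk_sim[OF assms(1), of p]
  obtain x where x: "cursor_walk (CRoot A) p = Some x" using assms(2) by (auto simp: bt_label_def)
  moreover from x walk obtain x' where x': "cursor_walk (CRoot B) p = Some x'" by fastforce
  moreover from x x' walk obtain k where "cursor_sim s k x x'" by blast
  ultimately show ?thesis using cursor_label_sim
    by (cases "cursor_ann x"; cases "cursor_ann x'")
      (fastforce simp: bt_ann_def drop_positions_def clock_decreases_def)+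
qed

lemma bt_label_sim: "cursor_sim s n (CRoot A) (CRoot B) \<Longrightarrow> bt_label A = bt_label B"
proof
  fix p assume sim: "cursor_sim s n (CRoot A) (CRoot B)"
  note walk = cursor_walk_sim[OF sim, of p]
  show "bt_label A p = bt_label B p"
  proof (cases "cursor_walk (CRoot A) p")
    case (Some x)
    moreover from Some walk obtain x' where x': "cursor_walk (CRoot B) p = Some x'" by fastforce
    moreover from Some x' walk obtain k where "cursor_sim s k x x'" by blast
    ultimately show ?thesis using cursor_label_sim by (simp add: bt_label_def)
  qed (use walk in \<open>simp add: bt_label_def\<close>)
qed

lemma bt_le_ev_trans: "bt_le_ev M L \<Longrightarrow> bt_le_ev L N \<Longrightarrow> bt_le_ev M N"
  unfolding bt_le_ev_def
proof (elim conjE exE, intro conjI exI allI impI)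
  fix l1 l2 p
  assume "bt_label M = bt_label L" "bt_label L = bt_label N"
    and le1: "\<forall>p. bt_label M p \<noteq> None \<longrightarrow> l1 \<le> length p \<longrightarrow> bt_ann M p = None \<and> bt_ann L p = None \<or>
        (\<exists>k1 k2. bt_ann M p = Some k1 \<and> bt_ann L p = Some k2 \<and> k1 \<le> k2)"
    and le2: "\<forall>p. bt_label L p \<noteq> None \<longrightarrow> l2 \<le> length p \<longrightarrow> bt_ann L p = None \<and> bt_ann N p = None \<or>
        (\<exists>k1 k2. bt_ann L p = Some k1 \<and> bt_ann N p = Some k2 \<and> k1 \<le> k2)"
    and "bt_label M p \<noteq> None" "max l1 l2 \<le> length p"
  then show "bt_ann M p = None \<and> bt_ann N p = None \<or>
      (\<exists>k1 k2. bt_ann M p = Some k1 \<and> bt_ann N p = Some k2 \<and> k1 \<le> k2)"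
    using le1[rule_format, of p] le2[rule_format, of p] by fastforce
qed (simp add: fun_eq_iff)

lemma bt_le_ev_reduct: "beta\<^sup>*\<^sup>* N L \<Longrightarrow> bt_le_ev L N"
proof -
  assume "beta\<^sup>*\<^sup>* N L"
  then obtain m where "(beta ^^ m) N L" by (auto dest: rtranclp_imp_relpowp)
  then have sim: "cursor_sim False 0 (CRoot N) (CRoot L)" by (auto intro: cursor_sim.Root)
  show "bt_le_ev L N"
    unfolding bt_le_ev_def
    using bt_label_sim[OF sim] bt_ann_sim[OF sim] by (intro conjI exI[of _ 0]) fastforce+
qed

lemma bt_le_ev_simple_reduct:
  assumes "simple_term M" "beta\<^sup>*\<^sup>* M L"
  shows "bt_le_ev M L"
proof -
  obtain n where "(beta ^^ n) M L" using assms(2) by (auto dest: rtranclp_imp_relpowp)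
  then have sim: "cursor_sim True n (CRoot M) (CRoot L)"
    using assms(1) by (auto intro: cursor_sim.Root)
  define l where "l = Suc (Max (insert 0 (length ` drop_positions (CRoot M) (CRoot L))))"
  have "length p < l" if "p \<in> drop_positions (CRoot M) (CRoot L)" for p
    using finite_drop_positions[OF sim] that unfolding l_def by (simp add: le_imp_less_Suc)
  then show ?thesis
    unfolding bt_le_ev_def using bt_label_sim[OF sim] bt_ann_sim[OF sim]
    by (intro conjI exI[of _ l] allI impI) (fastforce simp: not_le[symmetric])+
qed

theorem theorem4p11:
  fixes M N :: dB
  assumes "simple_term M"
    and "\<not> bt_le_ev M N"
  shows "\<not> beta_eq M N"
proof
  assume "beta_eq M N"
  then obtain L where "beta\<^sup>*\<^sup>* M L" "beta\<^sup>*\<^sup>* N L" using beta_eq_common_reduct by blast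
  then have "bt_le_ev M L" "bt_le_ev L N"
    using bt_le_ev_simple_reduct[OF assms(1)] bt_le_ev_reduct by auto
  then show False using bt_le_ev_trans assms(2) by blast
qed

end
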